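(* Let $G$ be a finite simple connected graph with exactly $h$ holes. Suppose that all the holes in $G$ are pairwise edge-disjoint, that $G$ has at most one non-edge maximal clique, and that the clique number satisfies $\omega(G)=h+1$. Let $K$ be a clique of $G$ with $|V(K)|=\omega(G)$. Then there exists an acyclic digraph $D$ such that $C(D)=G\cup\{i_1,i_2\}$, where $i_1,i_2$ are two new isolated vertices, and all vertices of $K$ have $i_2$ as a common out-neighbor in $D$. In particular, $k(G)\le 2$.
   Context: A hole of a graph is an induced (chordless) cycle of length at least $4$. A clique is a complete subgraph; a clique is non-edge if it has at least $3$ vertices. $\omega(G)$ is the maximum number of vertices of a clique in $G$. For a digraph $D=(V,A)$, its competition graph $C(D)$ has vertex set $V$, with distinct $x,y$ adjacent iff there is $v\in V$ with $(x,v),(y,v)\in A$. The competition number $k(G)$ is the smallest $k\ge 0$ such that $G$ together with $k$ new isolated vertices is the competition graph of an acyclic digraph. $G\cup\{i_1,i_2\}$ denotes the disjoint union of $G$ with two isolated vertices. *)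

theory Defs
  imports Main
begin

definition simple_graph :: "'a set \<Rightarrow> ('a \<Rightarrow> 'a \<Rightarrow> bool) \<Rightarrow> bool" where
  "simple_graph V E \<longleftrightarrow> finite V \<and> (\<forall>x y. E x y \<longrightarrow> x \<in> V \<and> y \<in> V \<and> x \<noteq> y \<and> E y x)"

definition connected_graph :: "'a set \<Rightarrow> ('a \<Rightarrow> 'a \<Rightarrow> bool) \<Rightarrow> bool" where
  "connected_graph V E \<longleftrightarrow> V \<noteq> {} \<and> (\<forall>x\<in>V. \<forall>y\<in>V. E\<^sup>*\<^sup>* x y)"

definition is_hole :: "'a set \<Rightarrow> ('a \<Rightarrow> 'a \<Rightarrow> bool) \<Rightarrow> 'a set \<Rightarrow> bool" where
  "is_hole V E S \<longleftrightarrow> S \<subseteq> V \<and> (\<exists>xs. distinct xs \<and> set xs = S \<and> length xs \<ge> 4 \<and>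
     (\<forall>i<length xs. \<forall>j<length xs.
        E (xs ! i) (xs ! j) \<longleftrightarrow> (j = Suc i mod length xs \<or> i = Suc j mod length xs)))"

definition holes :: "'a set \<Rightarrow> ('a \<Rightarrow> 'a \<Rightarrow> bool) \<Rightarrow> 'a set set" where
  "holes V E = {S. is_hole V E S}"

text \<open>Two holes are edge-disjoint if they share no edge (holes are induced, so the
  edges of a hole S are the edges of G with both ends in S).\<close>
definition edge_disjoint :: "('a \<Rightarrow> 'a \<Rightarrow> bool) \<Rightarrow> 'a set \<Rightarrow> 'a set \<Rightarrow> bool" where
  "edge_disjoint E S T \<longleftrightarrow> \<not> (\<exists>u v. u \<in> S \<inter> T \<and> v \<in> S \<inter> T \<and> E u v)"

definition is_clique :: "'a set \<Rightarrow> ('a \<Rightarrow> 'a \<Rightarrow> bool) \<Rightarrow> 'a set \<Rightarrow> bool" where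
  "is_clique V E K \<longleftrightarrow> K \<subseteq> V \<and> (\<forall>x\<in>K. \<forall>y\<in>K. x \<noteq> y \<longrightarrow> E x y)"

definition maximal_clique :: "'a set \<Rightarrow> ('a \<Rightarrow> 'a \<Rightarrow> bool) \<Rightarrow> 'a set \<Rightarrow> bool" where
  "maximal_clique V E K \<longleftrightarrow> is_clique V E K \<and> (\<forall>K'. is_clique V E K' \<and> K \<subseteq> K' \<longrightarrow> K' = K)"

definition nonedge_maximal_cliques :: "'a set \<Rightarrow> ('a \<Rightarrow> 'a \<Rightarrow> bool) \<Rightarrow> 'a set set" where
  "nonedge_maximal_cliques V E = {K. maximal_clique V E K \<and> card K \<ge> 3}"

definition clique_number :: "'a set \<Rightarrow> ('a \<Rightarrow> 'a \<Rightarrow> bool) \<Rightarrow> nat" where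
  "clique_number V E = Max {card K | K. is_clique V E K}"

definition is_competition_graph :: "'b set \<Rightarrow> ('b \<times> 'b) set \<Rightarrow> ('b \<Rightarrow> 'b \<Rightarrow> bool) \<Rightarrow> bool" where
  "is_competition_graph W A F \<longleftrightarrow> A \<subseteq> W \<times> W \<and>
     (\<forall>x\<in>W. \<forall>y\<in>W. x \<noteq> y \<longrightarrow> (F x y \<longleftrightarrow> (\<exists>v\<in>W. (x, v) \<in> A \<and> (y, v) \<in> A)))"

definition competition_number :: "'a set \<Rightarrow> ('a \<Rightarrow> 'a \<Rightarrow> bool) \<Rightarrow> nat" where
  "competition_number V E = (LEAST k. \<exists>A :: (('a + nat) \<times> ('a + nat)) set. acyclic A \<and>
     is_competition_graph (Inl ` V \<union> Inr ` {..<k}) A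
       (\<lambda>x y. case (x, y) of (Inl a, Inl b) \<Rightarrow> E a b | _ \<Rightarrow> False))"

end

theory Submission
  imports Defs
begin

text \<open>
  Let H be G with the edges inside the maximum clique K deleted. The proof has five steps.
  (1) Every triangle of G lies in K: it extends to a maximal clique with at least 3 vertices,
      and K is the only one.
  (2) Hence a vertex v outside K has an independent neighbourhood. If also G - v is connected,
      v has at most two neighbours, and two only when v lies on a hole (a shortest detour
      between the neighbours closes one); edge-disjointness of the holes rules out more.
      Deleting vertices farthest from K one at a time gives |E(H)| + |K| \<le> |V| + h,
      i.e. |E(H)| \<le> |V| - 1.
  (3) Deleting vertices of minimum degree orders V so that, for every t, at most t edges of H
      have their earlier end among the first t vertices.
  (4) By Hall's theorem for nested candidate sets the edges of H receive distinct sinks among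
      i1 and the vertices, each sink strictly earlier than both ends of its edge.
  (5) Both ends of an edge of H point to its sink and all of K points to i2; arcs decrease
      the position in the order, so the digraph is acyclic, and its competition graph is G
      together with the isolated vertices i1, i2.
\<close>

lemma simple_graph_sym: "simple_graph V E \<Longrightarrow> E x y \<Longrightarrow> E y x"
  unfolding simple_graph_def by blast

lemma simple_graph_irrefl: "simple_graph V E \<Longrightarrow> \<not> E x x"
  unfolding simple_graph_def by blast

lemma simple_graph_vertices: "simple_graph V E \<Longrightarrow> E x y \<Longrightarrow> x \<in> V \<and> y \<in> V"
  unfolding simple_graph_def by blast

lemma simple_graph_finite: "simple_graph V E \<Longrightarrow> finite V"
  unfolding simple_graph_def by blast

lemma ex_max_point:
  fixes f :: "'a \<Rightarrow> nat"
  assumes "finite A" "A \<noteq> {}"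
  shows "\<exists>a\<in>A. \<forall>b\<in>A. f b \<le> f a"
proof -
  have "Max (f ` A) \<in> f ` A" using assms by simp
  then obtain a where "a \<in> A" "f a = Max (f ` A)" by auto
  then show ?thesis using assms(1) by (metis Max_ge finite_imageI imageI)
qed

section \<open>Cliques\<close>

abbreviation triangles_in :: "('a \<Rightarrow> 'a \<Rightarrow> bool) \<Rightarrow> 'a set \<Rightarrow> bool" where
  "triangles_in E K \<equiv> \<forall>x y z. E x y \<longrightarrow> E y z \<longrightarrow> E x z \<longrightarrow> x \<in> K"

lemma clique_card_le:
  assumes "finite V" "is_clique V E T"
  shows "card T \<le> clique_number V E"
proof -
  have "{card K | K. is_clique V E K} \<subseteq> card ` Pow V" unfolding is_clique_def by auto
  moreover have "finite (card ` Pow V)" using assms(1) by simp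
  ultimately have "finite {card K | K. is_clique V E K}" by (rule finite_subset)
  then show ?thesis unfolding clique_number_def using assms(2) by (auto intro: Max_ge)
qed

text \<open>Every clique extends to a maximal clique: take a largest clique containing it.\<close>
lemma maximal_clique_extension:
  assumes fin: "finite V" and T: "is_clique V E T"
  shows "\<exists>M. maximal_clique V E M \<and> T \<subseteq> M"
proof -
  let ?C = "{M. is_clique V E M \<and> T \<subseteq> M}"
  have "finite ?C" using fin unfolding is_clique_def by (auto intro: finite_subset[of _ "Pow V"])
  moreover have "?C \<noteq> {}" using T by blast
  ultimately obtain M where M: "M \<in> ?C" "\<forall>M'\<in>?C. card M' \<le> card M"
    using ex_max_point[of ?C card] by blast
  have "M' = M" if "is_clique V E M'" "M \<subseteq> M'" for M'
  proof -
    have "finite M'" using that(1) fin unfolding is_clique_def by (auto intro: finite_subset)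
    moreover have "card M' \<le> card M" using M that by auto
    ultimately show ?thesis using that(2) by (metis card_seteq)
  qed
  then show ?thesis using M(1) unfolding maximal_clique_def by blast
qed

lemma max_card_clique_maximal:
  assumes fin: "finite V" and K: "is_clique V E K" "card K = clique_number V E"
  shows "maximal_clique V E K"
proof -
  have "K' = K" if "is_clique V E K'" "K \<subseteq> K'" for K'
  proof -
    have "finite K'" using that(1) fin unfolding is_clique_def by (auto intro: finite_subset)
    moreover have "card K' \<le> card K" using clique_card_le[OF fin that(1)] K(2) by simp
    ultimately show ?thesis using that(2) by (metis card_seteq)
  qed
  then show ?thesis using K(1) unfolding maximal_clique_def by blast
qed

text \<open>With at most one non-edge maximal clique, every triangle lies in a maximum clique K:
  the triangle extends to a non-edge maximal clique, and so does K.\<close>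
lemma triangles_in_max_clique:
  assumes sg: "simple_graph V E" and one: "card (nonedge_maximal_cliques V E) \<le> 1"
    and K: "is_clique V E K" "card K = clique_number V E"
  shows "triangles_in E K"
proof (intro allI impI)
  fix x y z assume xy: "E x y" and yz: "E y z" and xz: "E x z"
  have fin: "finite V" using simple_graph_finite[OF sg] .
  have "x \<noteq> y" "y \<noteq> z" "x \<noteq> z" using xy yz xz simple_graph_irrefl[OF sg] by auto
  then have card_T: "card {x, y, z} = 3" by simp
  have T: "is_clique V E {x, y, z}" unfolding is_clique_def
    using xy yz xz simple_graph_vertices[OF sg] simple_graph_sym[OF sg] by auto
  obtain M where M: "maximal_clique V E M" "{x, y, z} \<subseteq> M"
    using maximal_clique_extension[OF fin T] by blast
  have "finite M" using M(1) fin unfolding maximal_clique_def is_clique_def by (auto intro: finite_subset)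
  then have "M \<in> nonedge_maximal_cliques V E"
    using M card_mono[OF _ M(2)] card_T unfolding nonedge_maximal_cliques_def by auto
  moreover have "K \<in> nonedge_maximal_cliques V E"
    using max_card_clique_maximal[OF fin K] clique_card_le[OF fin T] card_T K(2)
    unfolding nonedge_maximal_cliques_def by simp
  moreover have "finite (nonedge_maximal_cliques V E)"
    using fin unfolding nonedge_maximal_cliques_def maximal_clique_def is_clique_def
    by (auto intro: finite_subset[of _ "Pow V"])
  ultimately have "M = K" using one by (metis card_le_Suc0_iff_eq One_nat_def)
  then show "x \<in> K" using M(2) by auto
qed

section \<open>Holes through a vertex with an independent neighbourhood\<close>

text \<open>If a, b are non-adjacent neighbours of v, a shortest
  detour together with v is a hole.\<close>
definition detour :: "('a \<Rightarrow> 'a \<Rightarrow> bool) \<Rightarrow> 'a \<Rightarrow> 'a \<Rightarrow> 'a \<Rightarrow> 'a list \<Rightarrow> bool" where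
  "detour E v a b p \<longleftrightarrow> p \<noteq> [] \<and> hd p = a \<and> last p = b \<and> successively E p \<and>
     (\<forall>z\<in>set p. z = a \<or> z = b \<or> (z \<noteq> v \<and> \<not> E v z))"

lemma detour_skip_repeat:
  assumes "detour E v a b (xs @ [y] @ ys @ [y] @ zs)"
  shows "detour E v a b (xs @ [y] @ zs)"
proof -
  have s: "successively E (xs @ [y] @ ys @ [y] @ zs)" using assms by (simp add: detour_def)
  have "successively E (xs @ [y])" using s by (metis append_assoc successively_append_iff)
  moreover have "successively E (y # zs)" using s
    by (metis append_Cons append_Nil successively_append_iff)
  ultimately have "successively E (xs @ [y] @ zs)"
    by (cases zs) (auto simp: successively_append_iff)
  moreover have "hd (xs @ [y] @ zs) = hd (xs @ [y] @ ys @ [y] @ zs)" by (cases xs) auto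
  moreover have "last (xs @ [y] @ zs) = last (xs @ [y] @ ys @ [y] @ zs)"
    by (cases zs rule: rev_cases) auto
  ultimately show ?thesis using assms unfolding detour_def by auto
qed

lemma detour_skip_chord:
  assumes "detour E v a b (xs @ [x] @ ys @ [y] @ zs)" "E x y"
  shows "detour E v a b (xs @ [x, y] @ zs)"
proof -
  have s: "successively E (xs @ [x] @ ys @ [y] @ zs)" using assms by (simp add: detour_def)
  have "successively E (xs @ [x])" using s by (metis append_assoc successively_append_iff)
  moreover have "successively E (y # zs)" using s
    by (metis append_Cons append_Nil successively_append_iff)
  ultimately have "successively E (xs @ [x, y] @ zs)"
    using assms(2) by (cases zs) (auto simp: successively_append_iff)
  moreover have "hd (xs @ [x, y] @ zs) = hd (xs @ [x] @ ys @ [y] @ zs)" by (cases xs) auto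
  moreover have "last (xs @ [x, y] @ zs) = last (xs @ [x] @ ys @ [y] @ zs)"
    by (cases zs rule: rev_cases) auto
  ultimately show ?thesis using assms unfolding detour_def by auto
qed

lemma split_at_two_positions:
  assumes "i < j" "j < length p"
  shows "p = take i p @ [p ! i] @ take (j - Suc i) (drop (Suc i) p) @ [p ! j] @ drop (Suc j) p"
proof -
  have "take j p = take i (take j p) @ (take j p) ! i # drop (Suc i) (take j p)"
    using assms by (intro id_take_nth_drop) simp
  also have "\<dots> = take i p @ p ! i # take (j - Suc i) (drop (Suc i) p)"
    using assms by (simp add: min_def drop_take)
  finally show ?thesis using id_take_nth_drop[OF assms(2)] by simp
qed

lemma walk_vertices:
  assumes sg: "simple_graph V E" and walk: "successively E q" and len: "length q \<ge> 2"
  shows "set q \<subseteq> V"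
proof
  fix z assume "z \<in> set q"
  then obtain k where k: "k < length q" "q ! k = z" by (auto simp: in_set_conv_nth)
  have "E (q ! k) (q ! Suc k) \<or> E (q ! (k - 1)) (q ! k)"
    using successively_nth[OF walk, of k] successively_nth[OF walk, of "k - 1"] k len
    by (cases k) auto
  then show "z \<in> V" using k simple_graph_vertices[OF sg] by blast
qed

definition induced_path :: "('a \<Rightarrow> 'a \<Rightarrow> bool) \<Rightarrow> 'a list \<Rightarrow> bool" where
  "induced_path E q \<longleftrightarrow> distinct q \<and>
     (\<forall>i<length q. \<forall>j<length q. E (q ! i) (q ! j) \<longleftrightarrow> (j = Suc i \<or> i = Suc j))"

lemma shortest_detour_induced:
  assumes sg: "simple_graph V E" and q: "detour E v a b q"
    and shortest: "\<forall>q'. detour E v a b q' \<longrightarrow> length q \<le> length q'"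
  shows "induced_path E q"
proof -
  have "distinct q"
  proof (rule ccontr)
    assume "\<not> distinct q"
    then obtain xs ys zs y where q_eq: "q = xs @ [y] @ ys @ [y] @ zs"
      using not_distinct_decomp by blast
    then have "detour E v a b (xs @ [y] @ zs)" using q detour_skip_repeat by metis
    then show False using shortest q_eq by fastforce
  qed
  have no_chord: "\<not> E (q ! i) (q ! j)" if ij: "Suc i < j" "j < length q" for i j
  proof
    assume "E (q ! i) (q ! j)"
    then have "detour E v a b (take i q @ [q ! i, q ! j] @ drop (Suc j) q)"
      using split_at_two_positions[of i j q] ij q detour_skip_chord by (metis Suc_lessD)
    then show False using shortest ij by fastforce
  qed
  have step: "successively E q" using q unfolding detour_def by simp
  have forward: "E (q ! i) (q ! j) \<longleftrightarrow> j = Suc i" if "i < j" "j < length q" for i j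
    using no_chord[of i j] successively_nth[OF step, of i] that by (cases "j = Suc i") auto
  have "E (q ! i) (q ! j) \<longleftrightarrow> (j = Suc i \<or> i = Suc j)" if "i < length q" "j < length q" for i j
  proof -
    have "E (q ! i) (q ! j) \<longleftrightarrow> E (q ! j) (q ! i)" using simple_graph_sym[OF sg] by blast
    then show ?thesis using that forward[of i j] forward[of j i] simple_graph_irrefl[OF sg]
      by (cases i j rule: linorder_cases) auto
  qed
  then show ?thesis unfolding induced_path_def using \<open>distinct q\<close> by blast
qed

lemma hole_of_induced_path:
  assumes sg: "simple_graph V E" and q: "induced_path E q" and n3: "length q \<ge> 3"
    and vV: "v \<in> V" and vq: "v \<notin> set q" and qV: "set q \<subseteq> V"
    and ends: "\<forall>k<length q. E v (q ! k) \<longleftrightarrow> k = 0 \<or> k = length q - 1"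
  shows "is_hole V E (set (v # q))"
proof -
  define n where "n = length q"
  define xs where "xs = v # q"
  have lxs: "length xs = Suc n" using xs_def n_def by simp
  have ind: "\<And>i j. i < n \<Longrightarrow> j < n \<Longrightarrow> E (q ! i) (q ! j) \<longleftrightarrow> (j = Suc i \<or> i = Suc j)"
    using q unfolding induced_path_def n_def by blast
  have vnb: "\<And>k. k < n \<Longrightarrow> E v (q ! k) \<longleftrightarrow> k = 0 \<or> k = n - 1" using ends n_def by blast
  have "E (xs ! i) (xs ! j) \<longleftrightarrow> (j = Suc i mod length xs \<or> i = Suc j mod length xs)"
    if i: "i < length xs" and j: "j < length xs" for i j
  proof (cases i)
    case 0
    show ?thesis
    proof (cases j)
      case 0 then show ?thesis using \<open>i = 0\<close> lxs n3 n_def simple_graph_irrefl[OF sg] by force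
    next
      case (Suc l)
      have "E (xs ! i) (xs ! j) \<longleftrightarrow> l = 0 \<or> l = n - 1"
        using vnb[of l] \<open>i = 0\<close> Suc j lxs xs_def by simp
      moreover have "Suc j mod length xs = 0 \<longleftrightarrow> l = n - 1" using Suc j lxs n3 by (auto simp: mod_if)
      ultimately show ?thesis using \<open>i = 0\<close> Suc lxs n3 by auto
    qed
  next
    case (Suc k)
    show ?thesis
    proof (cases j)
      case 0
      have "E (xs ! i) (xs ! j) \<longleftrightarrow> k = 0 \<or> k = n - 1"
        using vnb[of k] 0 Suc i lxs xs_def simple_graph_sym[OF sg] by auto
      moreover have "Suc i mod length xs = 0 \<longleftrightarrow> k = n - 1" using Suc i lxs n3 by (auto simp: mod_if)
      ultimately show ?thesis using 0 Suc lxs n3 by auto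
    next
      case (Suc l)
      have "E (xs ! i) (xs ! j) \<longleftrightarrow> (l = Suc k \<or> k = Suc l)"
        using ind[of k l] \<open>i = Suc k\<close> Suc i j lxs xs_def by simp
      moreover have "Suc i mod length xs = (if k = n - 1 then 0 else Suc i)"
        "Suc j mod length xs = (if l = n - 1 then 0 else Suc j)"
        using i j \<open>i = Suc k\<close> Suc lxs by auto
      ultimately show ?thesis using \<open>i = Suc k\<close> Suc i j lxs by auto
    qed
  qed
  moreover have "distinct xs" using q vq unfolding xs_def induced_path_def by simp
  ultimately show ?thesis
    unfolding is_hole_def using qV vV lxs n3 n_def xs_def by (intro conjI exI[of _ xs]) auto
qed

lemma hole_from_detour:
  assumes sg: "simple_graph V E" and va: "E v a" and vb: "E v b" and ab: "a \<noteq> b" "\<not> E a b"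
    and p: "detour E v a b p"
  shows "\<exists>S. is_hole V E S \<and> v \<in> S \<and> a \<in> S \<and> b \<in> S \<and> (\<forall>c\<in>S. E v c \<longrightarrow> c = a \<or> c = b)"
proof -
  obtain q where q: "detour E v a b q" and shortest: "\<forall>q'. detour E v a b q' \<longrightarrow> length q \<le> length q'"
    using ex_has_least_nat[of "detour E v a b" p length] p by blast
  have ind: "induced_path E q" using shortest_detour_induced[OF sg q shortest] .
  have qne: "q \<noteq> []" and hq: "hd q = a" and lq: "last q = b" and step: "successively E q"
    and inner: "\<forall>z\<in>set q. z = a \<or> z = b \<or> (z \<noteq> v \<and> \<not> E v z)"
    using q unfolding detour_def by auto
  define n where "n = length q"
  have q0: "q ! 0 = a" and qn: "q ! (n - 1) = b"
    using hq lq qne by (simp_all add: hd_conv_nth last_conv_nth n_def)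
  have "n \<noteq> 1" using q0 qn ab by auto
  moreover have "n \<noteq> 2" using successively_nth[OF step, of 0] q0 qn ab n_def by auto
  moreover have "n \<noteq> 0" using qne n_def by simp
  ultimately have n3: "n \<ge> 3" by arith
  have dq: "distinct q" using ind unfolding induced_path_def by simp
  have ends: "\<forall>k<n. E v (q ! k) \<longleftrightarrow> k = 0 \<or> k = n - 1"
  proof (intro allI impI)
    fix k assume k: "k < n"
    have "0 < n" "n - 1 < n" using n3 by auto
    have "E v (q ! k) \<Longrightarrow> q ! k = q ! 0 \<or> q ! k = q ! (n - 1)"
      using inner k q0 qn n_def by (metis nth_mem)
    moreover have "q ! k = q ! 0 \<longleftrightarrow> k = 0" "q ! k = q ! (n - 1) \<longleftrightarrow> k = n - 1"
      using dq k \<open>0 < n\<close> \<open>n - 1 < n\<close> n_def by (simp_all add: nth_eq_iff_index_eq)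
    ultimately show "E v (q ! k) \<longleftrightarrow> k = 0 \<or> k = n - 1" using q0 qn va vb by auto
  qed
  have vq: "v \<notin> set q" using inner va vb simple_graph_irrefl[OF sg] by fastforce
  have qV: "set q \<subseteq> V" using walk_vertices[OF sg step] n3 n_def by simp
  have "is_hole V E (set (v # q))"
    using hole_of_induced_path[OF sg ind _ _ vq qV] n3 ends simple_graph_vertices[OF sg va] n_def
    by simp
  moreover have "\<forall>c\<in>set (v # q). E v c \<longrightarrow> c = a \<or> c = b"
    using inner simple_graph_irrefl[OF sg] by auto
  moreover have "a \<in> set q" "b \<in> set q" using hq lq qne by auto
  ultimately show ?thesis by (intro exI[of _ "set (v # q)"]) auto
qed

section \<open>Degree of a vertex with independent neighbourhood\<close>

abbreviation delete_vertex :: "('a \<Rightarrow> 'a \<Rightarrow> bool) \<Rightarrow> 'a \<Rightarrow> 'a \<Rightarrow> 'a \<Rightarrow> bool" where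
  "delete_vertex E v \<equiv> \<lambda>x y. E x y \<and> x \<noteq> v \<and> y \<noteq> v"

abbreviation independent_nbhd :: "('a \<Rightarrow> 'a \<Rightarrow> bool) \<Rightarrow> 'a \<Rightarrow> bool" where
  "independent_nbhd E v \<equiv> \<forall>a b. E v a \<longrightarrow> E v b \<longrightarrow> \<not> E a b"

abbreviation holes_edge_disjoint :: "'a set \<Rightarrow> ('a \<Rightarrow> 'a \<Rightarrow> bool) \<Rightarrow> bool" where
  "holes_edge_disjoint V E \<equiv> \<forall>S\<in>holes V E. \<forall>T\<in>holes V E. S \<noteq> T \<longrightarrow> edge_disjoint E S T"

lemma finite_holes: "finite V \<Longrightarrow> finite (holes V E)"
  unfolding holes_def is_hole_def by (auto intro: finite_subset[of _ "Pow V"])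

definition linked :: "('a \<Rightarrow> 'a \<Rightarrow> bool) \<Rightarrow> 'a \<Rightarrow> 'a \<Rightarrow> 'a \<Rightarrow> bool" where
  "linked E v w z \<longleftrightarrow> E v w \<and> E v z \<and> w \<noteq> z \<and> (\<exists>p. detour E v w z p)"

definition reach_avoiding :: "('a \<Rightarrow> 'a \<Rightarrow> bool) \<Rightarrow> 'a \<Rightarrow> 'a \<Rightarrow> 'a \<Rightarrow> bool" where
  "reach_avoiding E v w y \<longleftrightarrow> w \<noteq> v \<and> (\<exists>p. p \<noteq> [] \<and> hd p = w \<and> last p = y \<and>
     successively E p \<and> (\<forall>z\<in>set (tl p). z \<noteq> v \<and> \<not> E v z))"

lemma reach_avoiding_refl: "w \<noteq> v \<Longrightarrow> reach_avoiding E v w w"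
  unfolding reach_avoiding_def by (intro conjI exI[of _ "[w]"]) auto

lemma reach_avoiding_snoc:
  assumes "reach_avoiding E v w y" "E y z" "z \<noteq> v" "\<not> E v z"
  shows "reach_avoiding E v w z"
proof -
  obtain p where p: "w \<noteq> v" "p \<noteq> []" "hd p = w" "last p = y" "successively E p"
    "\<forall>z\<in>set (tl p). z \<noteq> v \<and> \<not> E v z" using assms(1) unfolding reach_avoiding_def by blast
  have "successively E (p @ [z])" using p(2,4,5) assms(2) by (auto simp: successively_append_iff)
  moreover have "set (tl (p @ [z])) \<subseteq> set (tl p) \<union> {z}" using p(2) by (cases p) auto
  ultimately show ?thesis unfolding reach_avoiding_def using p assms
    by (intro conjI exI[of _ "p @ [z]"]) (auto simp: hd_append)
qed

lemma reach_avoiding_linked: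
  assumes "reach_avoiding E v w y" "E y z" "E v z" "E v w" "z \<noteq> w"
  shows "linked E v w z"
proof -
  obtain p where p: "p \<noteq> []" "hd p = w" "last p = y" "successively E p"
    "\<forall>z\<in>set (tl p). z \<noteq> v \<and> \<not> E v z" using assms(1) unfolding reach_avoiding_def by blast
  have "successively E (p @ [z])" using p(1,3,4) assms(2) by (auto simp: successively_append_iff)
  moreover have "set (p @ [z]) \<subseteq> {w} \<union> set (tl p) \<union> {z}" using p(1,2) by (cases p) auto
  ultimately have "detour E v w z (p @ [z])" unfolding detour_def using p by (auto simp: hd_append)
  then show ?thesis unfolding linked_def using assms by blast
qed

lemma reach_avoiding_nbr:
  assumes "reach_avoiding E v w c" "E v c"
  shows "c = w"
proof -
  obtain p where p: "p \<noteq> []" "hd p = w" "last p = c" "\<forall>z\<in>set (tl p). z \<noteq> v \<and> \<not> E v z"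
    using assms(1) unfolding reach_avoiding_def by blast
  show ?thesis
  proof (cases "tl p = []")
    case True then show ?thesis using p by (cases p) auto
  next
    case False
    then have "last p \<in> set (tl p)" using p(1) by (cases p) auto
    then show ?thesis using p assms(2) by blast
  qed
qed

lemma linked_sym:
  assumes sg: "simple_graph V E" and l: "linked E v w z"
  shows "linked E v z w"
proof -
  obtain p where p: "detour E v w z p" using l unfolding linked_def by blast
  have "successively E (rev p)" using p simple_graph_sym[OF sg] unfolding detour_def
    by (auto simp: successively_rev elim: successively_mono)
  then have "detour E v z w (rev p)" using p unfolding detour_def by (auto simp: hd_rev last_rev)
  then show ?thesis using l unfolding linked_def by blast
qed

lemma linked_hole:
  assumes sg: "simple_graph V E" and ind: "independent_nbhd E v" and l: "linked E v w z"
  shows "\<exists>S. is_hole V E S \<and> v \<in> S \<and> w \<in> S \<and> z \<in> S \<and> (\<forall>c\<in>S. E v c \<longrightarrow> c = w \<or> c = z)"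
proof -
  obtain p where "E v w" "E v z" "w \<noteq> z" "detour E v w z p" using l unfolding linked_def by blast
  moreover have "\<not> E w z" using ind \<open>E v w\<close> \<open>E v z\<close> by blast
  ultimately show ?thesis using hole_from_detour[OF sg] by blast
qed

text \<open>Each neighbour is linked to at most one other neighbour: the two holes obtained otherwise
  would be distinct but share the edge between v and the common neighbour.\<close>
lemma linked_unique:
  assumes sg: "simple_graph V E" and ind: "independent_nbhd E v"
    and ed: "holes_edge_disjoint V E"
    and l1: "linked E v a b" and l2: "linked E v a c"
  shows "b = c"
proof (rule ccontr)
  assume bc: "b \<noteq> c"
  obtain S1 where S1: "is_hole V E S1" "v \<in> S1" "a \<in> S1" "\<forall>x\<in>S1. E v x \<longrightarrow> x = a \<or> x = b"
    using linked_hole[OF sg ind l1] by blast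
  obtain S2 where S2: "is_hole V E S2" "v \<in> S2" "a \<in> S2" "c \<in> S2"
    using linked_hole[OF sg ind l2] by blast
  have "c \<notin> S1" using S1(4) bc l2 unfolding linked_def by blast
  then have "edge_disjoint E S1 S2" using ed S1(1) S2 unfolding holes_def by blast
  then show False using S1 S2 l1 unfolding edge_disjoint_def linked_def by blast
qed

lemma reach_in_delete_vertex:
  assumes sg: "simple_graph V E" and ind: "independent_nbhd E v"
    and ed: "holes_edge_disjoint V E" and va: "E v a"
    and walk: "(delete_vertex E v)\<^sup>*\<^sup>* a y"
  shows "\<exists>w. (w = a \<or> linked E v a w) \<and> reach_avoiding E v w y"
  using walk
proof (induction rule: rtranclp_induct)
  case base
  have "a \<noteq> v" using va simple_graph_irrefl[OF sg] by auto
  then have "reach_avoiding E v a a" by (rule reach_avoiding_refl)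
  then show ?case by blast
next
  case (step y z)
  obtain w where w: "w = a \<or> linked E v a w" "reach_avoiding E v w y" using step.IH by blast
  have yz: "E y z" "z \<noteq> v" using step.hyps(2) by auto
  consider "\<not> E v z" | "z = w" | "E v z" "z \<noteq> w" by blast
  then show ?case
  proof cases
    case 1
    then show ?thesis using reach_avoiding_snoc[OF w(2) yz] w(1) by blast
  next
    case 2
    then show ?thesis using reach_avoiding_refl[OF yz(2)] w(1) by blast
  next
    case 3
    have "E v w" using w(1) va unfolding linked_def by auto
    then have lwz: "linked E v w z" using reach_avoiding_linked[OF w(2) yz(1)] 3 by blast
    have "z = a \<or> linked E v a z"
    proof (cases "w = a")
      case False
      then have "linked E v w a" using w(1) linked_sym[OF sg] by blast
      then show ?thesis using linked_unique[OF sg ind ed _ lwz] by blast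
    qed (use lwz in blast)
    then show ?thesis using reach_avoiding_refl[OF yz(2)] by blast
  qed
qed

lemma nbrs_linked:
  assumes sg: "simple_graph V E" and ind: "independent_nbhd E v"
    and ed: "holes_edge_disjoint V E"
    and conn: "\<forall>x\<in>V-{v}. \<forall>y\<in>V-{v}. (delete_vertex E v)\<^sup>*\<^sup>* x y"
    and a: "E v a" and c: "E v c" "c \<noteq> a"
  shows "linked E v a c"
proof -
  have "a \<in> V - {v}" "c \<in> V - {v}"
    using a c simple_graph_vertices[OF sg] simple_graph_irrefl[OF sg] by auto
  then obtain w where "w = a \<or> linked E v a w" "reach_avoiding E v w c"
    using conn reach_in_delete_vertex[OF sg ind ed a] by blast
  then show ?thesis using reach_avoiding_nbr c by metis
qed

text \<open>Hence such a vertex has at most two neighbours, and two only if it lies on a hole.\<close>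
lemma degree_bound:
  assumes sg: "simple_graph V E" and ind: "independent_nbhd E v"
    and ed: "holes_edge_disjoint V E"
    and conn: "\<forall>x\<in>V-{v}. \<forall>y\<in>V-{v}. (delete_vertex E v)\<^sup>*\<^sup>* x y"
  shows "card {y. E v y} \<le> 1 + card {S \<in> holes V E. v \<in> S}"
proof (cases "card {y. E v y} \<le> 1")
  case False
  have finN: "finite {y. E v y}"
    using simple_graph_finite[OF sg] simple_graph_vertices[OF sg] by (auto intro: finite_subset)
  have "\<exists>a\<in>{y. E v y}. \<exists>b\<in>{y. E v y}. a \<noteq> b"
    using False finN by (metis One_nat_def card_le_Suc0_iff_eq not_less_eq_eq)
  then obtain a b where ab: "E v a" "E v b" "a \<noteq> b" by blast
  have lab: "linked E v a b" using nbrs_linked[OF sg ind ed conn ab(1,2)] ab(3) by metis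
  have "c \<in> {a, b}" if "E v c" for c
  proof (cases "c = a")
    case False
    then have "linked E v a c" using nbrs_linked[OF sg ind ed conn ab(1) that] by blast
    then show ?thesis using linked_unique[OF sg ind ed lab] by blast
  qed simp
  then have "{y. E v y} \<subseteq> {a, b}" by blast
  then have "card {y. E v y} \<le> 2" by (metis card_2_iff card_mono finite.emptyI finite_insert ab(3))
  obtain S where "is_hole V E S" "v \<in> S" using linked_hole[OF sg ind lab] by blast
  then have "S \<in> {S \<in> holes V E. v \<in> S}" unfolding holes_def by simp
  moreover have "finite {S \<in> holes V E. v \<in> S}"
    using finite_holes[OF simple_graph_finite[OF sg]] by simp
  ultimately have "card {S \<in> holes V E. v \<in> S} \<ge> 1"
    by (metis One_nat_def Suc_leI card_gt_0_iff empty_iff)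
  then show ?thesis using \<open>card {y. E v y} \<le> 2\<close> by simp
qed simp

section \<open>Few edges outside the maximum clique\<close>

text \<open>The graph H of the proof: G without the edges inside K.\<close>
abbreviation off_clique :: "('a \<Rightarrow> 'a \<Rightarrow> bool) \<Rightarrow> 'a set \<Rightarrow> 'a \<Rightarrow> 'a \<Rightarrow> bool" where
  "off_clique E K \<equiv> \<lambda>x y. E x y \<and> \<not> (x \<in> K \<and> y \<in> K)"

text \<open>Number of ordered adjacent pairs inside R (twice the number of edges), and degrees in R.\<close>
definition arc_count :: "('a \<Rightarrow> 'a \<Rightarrow> bool) \<Rightarrow> 'a set \<Rightarrow> nat" where
  "arc_count H R = card {(x, y). x \<in> R \<and> y \<in> R \<and> H x y}"

definition degree_in :: "('a \<Rightarrow> 'a \<Rightarrow> bool) \<Rightarrow> 'a set \<Rightarrow> 'a \<Rightarrow> nat" where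
  "degree_in H R v = card {y \<in> R. H v y}"

lemma arc_count_degree_sum: "finite R \<Longrightarrow> arc_count H R = (\<Sum>x\<in>R. degree_in H R x)"
proof -
  assume "finite R"
  moreover have "{(x, y). x \<in> R \<and> y \<in> R \<and> H x y} = Sigma R (\<lambda>x. {y \<in> R. H x y})" by auto
  ultimately show ?thesis unfolding arc_count_def degree_in_def by simp
qed

lemma arc_count_remove:
  assumes fin: "finite R" and vR: "v \<in> R" and sym: "\<And>x y. H x y \<Longrightarrow> H y x" and irr: "\<And>x. \<not> H x x"
  shows "arc_count H R = arc_count H (R - {v}) + 2 * degree_in H R v"
proof -
  let ?A = "{(x, y). x \<in> R - {v} \<and> y \<in> R - {v} \<and> H x y}"
  let ?B = "Pair v ` {y \<in> R. H v y}"
  let ?C = "(\<lambda>y. (y, v)) ` {y \<in> R. H v y}"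
  have split: "{(x, y). x \<in> R \<and> y \<in> R \<and> H x y} = ?A \<union> ?B \<union> ?C" using vR sym by auto
  have "finite ?A" using fin by (auto intro: finite_subset[of _ "R \<times> R"])
  moreover have "finite ?B" "finite ?C" "?A \<inter> ?B = {}" "?A \<inter> ?C = {}" "?B \<inter> ?C = {}"
    using fin irr by auto
  ultimately have "card (?A \<union> ?B \<union> ?C) = card ?A + card ?B + card ?C"
    by (simp add: card_Un_disjoint Int_Un_distrib2)
  moreover have "card ?B = degree_in H R v" "card ?C = degree_in H R v"
    unfolding degree_in_def by (simp_all add: card_image inj_on_def)
  ultimately show ?thesis unfolding arc_count_def split by simp
qed

lemma arc_count_off_clique_delete:
  assumes sg: "simple_graph V E" and v: "v \<in> V - K"
  shows "arc_count (off_clique E K) V =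
    arc_count (off_clique (delete_vertex E v) K) (V - {v}) + 2 * card {y. E v y}"
proof -
  have "arc_count (off_clique E K) V = arc_count (off_clique E K) (V - {v})
      + 2 * degree_in (off_clique E K) V v"
    using arc_count_remove[OF simple_graph_finite[OF sg], of v "off_clique E K"] v
      simple_graph_sym[OF sg] simple_graph_irrefl[OF sg] by blast
  moreover have "{y \<in> V. off_clique E K v y} = {y. E v y}" using v simple_graph_vertices[OF sg] by auto
  moreover have "{(x, y). x \<in> V - {v} \<and> y \<in> V - {v} \<and> off_clique E K x y} =
      {(x, y). x \<in> V - {v} \<and> y \<in> V - {v} \<and> off_clique (delete_vertex E v) K x y}" by auto
  ultimately show ?thesis unfolding arc_count_def degree_in_def by simp
qed

lemma holes_delete_vertex:
  "holes (V - {v}) (delete_vertex E v) = {S \<in> holes V E. v \<notin> S}"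
proof -
  have "is_hole (V - {v}) (delete_vertex E v) S \<longleftrightarrow> is_hole V E S \<and> v \<notin> S" for S
  proof
    assume "is_hole (V - {v}) (delete_vertex E v) S"
    then obtain xs where xs: "S \<subseteq> V - {v}" "distinct xs" "set xs = S" "length xs \<ge> 4"
      "\<forall>i<length xs. \<forall>j<length xs. (E (xs ! i) (xs ! j) \<and> xs ! i \<noteq> v \<and> xs ! j \<noteq> v) \<longleftrightarrow>
          (j = Suc i mod length xs \<or> i = Suc j mod length xs)"
      unfolding is_hole_def by blast
    moreover have "\<forall>i<length xs. xs ! i \<noteq> v" using xs(1,3) nth_mem by blast
    ultimately show "is_hole V E S \<and> v \<notin> S" unfolding is_hole_def by auto
  next
    assume h: "is_hole V E S \<and> v \<notin> S"
    then obtain xs where xs: "S \<subseteq> V" "distinct xs" "set xs = S" "length xs \<ge> 4"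
      "\<forall>i<length xs. \<forall>j<length xs. E (xs ! i) (xs ! j) \<longleftrightarrow>
          (j = Suc i mod length xs \<or> i = Suc j mod length xs)"
      unfolding is_hole_def by blast
    moreover have "\<forall>i<length xs. xs ! i \<noteq> v" using xs(3) h nth_mem by blast
    ultimately show "is_hole (V - {v}) (delete_vertex E v) S"
      unfolding is_hole_def using h by (intro conjI exI[of _ xs]) auto
  qed
  then show ?thesis unfolding holes_def by auto
qed

lemma card_holes_delete_vertex:
  assumes "finite V"
  shows "card (holes V E) = card (holes (V - {v}) (delete_vertex E v)) + card {S \<in> holes V E. v \<in> S}"
proof -
  have "holes V E = {S \<in> holes V E. v \<notin> S} \<union> {S \<in> holes V E. v \<in> S}" by auto
  then have "card (holes V E) = card {S \<in> holes V E. v \<notin> S} + card {S \<in> holes V E. v \<in> S}"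
    using finite_holes[OF assms] by (metis (no_types, lifting) card_Un_disjoint disjoint_iff
      finite_Un mem_Collect_eq)
  then show ?thesis unfolding holes_delete_vertex .
qed

definition dist_to :: "('a \<Rightarrow> 'a \<Rightarrow> bool) \<Rightarrow> 'a set \<Rightarrow> 'a \<Rightarrow> nat" where
  "dist_to E K u = (LEAST n. \<exists>k\<in>K. (E ^^ n) u k)"

lemma dist_to_step:
  assumes "k \<in> K" "(E ^^ n) u k" "u \<notin> K"
  shows "\<exists>w. E u w \<and> dist_to E K w < dist_to E K u"
proof -
  obtain k' where k': "k' \<in> K" "(E ^^ dist_to E K u) u k'"
    using LeastI_ex[of "\<lambda>n. \<exists>k\<in>K. (E ^^ n) u k"] assms(1,2) unfolding dist_to_def by blast
  then obtain m where m: "dist_to E K u = Suc m" using assms(3) by (cases "dist_to E K u") auto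
  then obtain w where w: "E u w" "(E ^^ m) w k'" using k'(2) relpowp_Suc_D2 by metis
  have "dist_to E K w \<le> m" unfolding dist_to_def using w(2) k'(1) by (blast intro: Least_le)
  then show ?thesis using w(1) m by auto
qed

text \<open>In a connected graph, deleting a vertex outside the clique K at maximal distance from K
  keeps the graph connected: every other vertex still reaches K by a shortest path.\<close>
lemma farthest_vertex_deletable:
  assumes sg: "simple_graph V E" and conn: "\<forall>x\<in>V. \<forall>y\<in>V. E\<^sup>*\<^sup>* x y"
    and cl: "is_clique V E K" and Kne: "K \<noteq> {}" and ne: "V - K \<noteq> {}"
  shows "\<exists>v\<in>V - K. \<forall>x\<in>V - {v}. \<forall>y\<in>V - {v}. (delete_vertex E v)\<^sup>*\<^sup>* x y"
proof -
  have KV: "K \<subseteq> V" using cl unfolding is_clique_def by simp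
  obtain v where v: "v \<in> V - K" and far: "\<forall>u\<in>V - K. dist_to E K u \<le> dist_to E K v"
    using ex_max_point[of "V - K" "dist_to E K"] simple_graph_finite[OF sg] ne by blast
  have to_K: "\<exists>k\<in>K. (delete_vertex E v)\<^sup>*\<^sup>* u k" if "u \<in> V - {v}" for u
    using that
  proof (induction "dist_to E K u" arbitrary: u rule: less_induct)
    case (less u)
    show ?case
    proof (cases "u \<in> K")
      case False
      obtain k where "k \<in> K" "E\<^sup>*\<^sup>* u k" using Kne KV conn less.prems by blast
      then obtain w where w: "E u w" "dist_to E K w < dist_to E K u"
        using dist_to_step[OF _ _ False] rtranclp_imp_relpowp by metis
      have "dist_to E K u \<le> dist_to E K v" using far less.prems False by blast
      then have "w \<noteq> v" using w(2) by auto
      moreover have "w \<in> V" using w(1) simple_graph_vertices[OF sg] by blast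
      ultimately obtain k' where "k' \<in> K" "(delete_vertex E v)\<^sup>*\<^sup>* w k'" using less.hyps w(2) by blast
      moreover have "(delete_vertex E v)\<^sup>*\<^sup>* u w" using w(1) \<open>w \<noteq> v\<close> less.prems by auto
      ultimately show ?thesis by (meson rtranclp_trans)
    qed blast
  qed
  have sym: "symp (delete_vertex E v)" using simple_graph_sym[OF sg] by (auto intro: sympI)
  have "(delete_vertex E v)\<^sup>*\<^sup>* x y" if xy: "x \<in> V - {v}" "y \<in> V - {v}" for x y
  proof -
    obtain k1 k2 where k: "k1 \<in> K" "k2 \<in> K"
      "(delete_vertex E v)\<^sup>*\<^sup>* x k1" "(delete_vertex E v)\<^sup>*\<^sup>* y k2" using to_K xy by blast
    have "(delete_vertex E v)\<^sup>*\<^sup>* k1 k2" using cl k(1,2) v unfolding is_clique_def by (cases "k1 = k2") auto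
    moreover have "(delete_vertex E v)\<^sup>*\<^sup>* k2 y" using sympD[OF symp_rtranclp[OF sym] k(4)] .
    ultimately show ?thesis using k(3) by (meson rtranclp_trans)
  qed
  then show ?thesis using v by blast
qed

text \<open>Delete farthest vertices one at a time; each
  has an independent neighbourhood (triangles lie in K), so by the degree bound it carries at
  most one edge more than the holes it lies on.\<close>
lemma edge_bound:
  assumes "simple_graph V E" "\<forall>x\<in>V. \<forall>y\<in>V. E\<^sup>*\<^sup>* x y" "is_clique V E K" "K \<noteq> {}"
    "triangles_in E K" "holes_edge_disjoint V E"
  shows "arc_count (off_clique E K) V + 2 * card K \<le> 2 * card V + 2 * card (holes V E)"
  using assms
proof (induction "card (V - K)" arbitrary: V E)
  case 0
  then have "V = K" using simple_graph_finite[of V E] unfolding is_clique_def by auto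
  then have "{(x, y). x \<in> V \<and> y \<in> V \<and> off_clique E K x y} = {}" by auto
  then have "arc_count (off_clique E K) V = 0" unfolding arc_count_def by (simp only: card.empty)
  then show ?case using \<open>V = K\<close> by simp
next
  case (Suc n)
  note sg = Suc.prems(1) and cl = Suc.prems(3)
  have fin: "finite V" using simple_graph_finite[OF sg] .
  have "V - K \<noteq> {}" using Suc.hyps(2) by (metis card.empty nat.distinct(1))
  then obtain v where v: "v \<in> V - K" and conn': "\<forall>x\<in>V - {v}. \<forall>y\<in>V - {v}. (delete_vertex E v)\<^sup>*\<^sup>* x y"
    using farthest_vertex_deletable[OF sg Suc.prems(2) cl Suc.prems(4)] by blast
  have "n = card (V - {v} - K)" using Suc.hyps(2) v fin
    by (metis Diff_insert Diff_insert2 card_Diff_singleton diff_Suc_1 finite_Diff)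
  moreover have "simple_graph (V - {v}) (delete_vertex E v)" using sg unfolding simple_graph_def by auto
  moreover have "is_clique (V - {v}) (delete_vertex E v) K" using cl v unfolding is_clique_def by auto
  moreover have "holes_edge_disjoint (V - {v}) (delete_vertex E v)"
    using Suc.prems(6) unfolding holes_delete_vertex by (auto simp: edge_disjoint_def)
  moreover have "triangles_in (delete_vertex E v) K" using Suc.prems(5) by blast
  ultimately have IH: "arc_count (off_clique (delete_vertex E v) K) (V - {v}) + 2 * card K
      \<le> 2 * card (V - {v}) + 2 * card (holes (V - {v}) (delete_vertex E v))"
    using Suc.hyps(1)[of "V - {v}" "delete_vertex E v"] conn' Suc.prems(4) by blast
  have "independent_nbhd E v"
  proof (intro allI impI notI)
    fix a b assume "E v a" "E v b" "E a b"
    then have "v \<in> K" using Suc.prems(5) simple_graph_sym[OF sg] by blast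
    then show False using v by simp
  qed
  then have "card {y. E v y} \<le> 1 + card {S \<in> holes V E. v \<in> S}"
    using degree_bound[OF sg _ Suc.prems(6) conn'] by simp
  moreover have "card V = Suc (card (V - {v}))" using v fin by (metis DiffD1 card_Suc_Diff1)
  ultimately show ?case using IH arc_count_off_clique_delete[OF sg v] card_holes_delete_vertex[OF fin, of E v]
    by linarith
qed

section \<open>A vertex order with sparse prefixes\<close>

text \<open>Twice the excess of edges over vertices: surplus H R = 2 (|E(H[R])| - |R|).\<close>
definition surplus :: "('a \<Rightarrow> 'a \<Rightarrow> bool) \<Rightarrow> 'a set \<Rightarrow> int" where
  "surplus H R = int (arc_count H R) - 2 * int (card R)"

text \<open>Deleting a vertex of minimum degree d never pushes the surplus below min (surplus, -2):
  for d \<le> 1 the surplus does not drop, and for d \<ge> 2 the bound |E| \<ge> d |R| / 2 suffices.\<close>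
lemma surplus_delete_min_degree:
  assumes fin: "finite R" and vR: "v \<in> R" and sym: "\<And>x y. H x y \<Longrightarrow> H y x" and irr: "\<And>x. \<not> H x x"
    and min: "\<forall>u\<in>R. degree_in H R v \<le> degree_in H R u"
  shows "surplus H (R - {v}) \<ge> min (surplus H R) (-2)"
proof -
  define d where "d = degree_in H R v"
  have arcs: "arc_count H R = arc_count H (R - {v}) + 2 * d"
    using arc_count_remove[where H = H, OF fin vR sym irr] d_def by simp
  have cR: "card (R - {v}) = card R - 1" "card R \<ge> 1"
    using fin vR by (auto simp: card_Diff_singleton card_gt_0_iff intro!: Suc_leI)
  show ?thesis
  proof (cases "d \<le> 1")
    case True
    then show ?thesis unfolding surplus_def using arcs cR by linarith
  next
    case False
    have "arc_count H R \<ge> card R * d"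
      using arc_count_degree_sum[OF fin, of H] sum_bounded_below[of R d "degree_in H R"] min d_def
      by (simp add: mult.commute)
    then have "int (card R) * int d \<le> int (arc_count H R)" by (metis of_nat_le_iff of_nat_mult)
    moreover have "{y \<in> R. H v y} \<subseteq> R - {v}" using irr by auto
    then have "d \<le> card R - 1" unfolding d_def degree_in_def using fin cR by (metis card_mono finite_Diff)
    then have "(int d - 2) * (int (card R) - 2) \<ge> 0" using False by simp
    ultimately have "int (arc_count H R) - 2 * int d - 2 * (int (card R) - 1) \<ge> -2"
      by (simp add: algebra_simps)
    then show ?thesis unfolding surplus_def using arcs cR by simp
  qed
qed

lemma min_degree_order:
  assumes fin: "finite R" and sym: "\<And>x y. H x y \<Longrightarrow> H y x" and irr: "\<And>x. \<not> H x x"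
  shows "\<exists>xs. distinct xs \<and> set xs = R \<and> (\<forall>t. surplus H (set (drop t xs)) \<ge> min (surplus H R) (-2))"
  using fin
proof (induction R rule: finite_remove_induct)
  case empty
  have "surplus H {} = 0" unfolding surplus_def arc_count_def by simp
  then show ?case by (intro exI[of _ "[]"]) auto
next
  case (remove A)
  obtain v where v: "v \<in> A" "\<forall>u\<in>A. degree_in H A v \<le> degree_in H A u"
    using ex_has_least_nat[of "\<lambda>u. u \<in> A" _ "degree_in H A"] remove.hyps(2) by blast
  obtain xs where xs: "distinct xs" "set xs = A - {v}"
    "\<forall>t. surplus H (set (drop t xs)) \<ge> min (surplus H (A - {v})) (-2)"
    using remove.IH[OF v(1)] by blast
  have step: "surplus H (A - {v}) \<ge> min (surplus H A) (-2)"
    using surplus_delete_min_degree[where H = H, OF remove.hyps(1) v(1) sym irr v(2)] .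
  have "surplus H (set (drop t (v # xs))) \<ge> min (surplus H A) (-2)" for t
  proof (cases t)
    case 0 then show ?thesis using xs(2) v(1) by (simp add: insert_absorb)
  next
    case (Suc t')
    have "min (surplus H (A - {v})) (-2) \<le> surplus H (set (drop t' xs))" using xs(3) by blast
    then show ?thesis using Suc step by (auto simp: min_def split: if_splits)
  qed
  moreover have "distinct (v # xs)" "set (v # xs) = A" using xs v(1) by auto
  ultimately show ?case by blast
qed

definition forward_edges :: "('a \<Rightarrow> 'a \<Rightarrow> bool) \<Rightarrow> 'a list \<Rightarrow> (nat \<times> nat) set" where
  "forward_edges H xs = {(i, j). i < j \<and> j < length xs \<and> H (xs ! i) (xs ! j)}"

definition prefix_sparse :: "('a \<Rightarrow> 'a \<Rightarrow> bool) \<Rightarrow> 'a list \<Rightarrow> bool" where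
  "prefix_sparse H xs \<longleftrightarrow> (\<forall>t. card {e \<in> forward_edges H xs. fst e < t} \<le> t)"

lemma finite_forward_edges: "finite (forward_edges H xs)"
  unfolding forward_edges_def
  by (rule finite_subset[of _ "{..<length xs} \<times> {..<length xs}"]) auto

lemma in_set_drop_conv_nth: "x \<in> set (drop t xs) \<longleftrightarrow> (\<exists>i. t \<le> i \<and> i < length xs \<and> x = xs ! i)"
proof
  assume "x \<in> set (drop t xs)"
  then obtain k where "k < length (drop t xs)" "drop t xs ! k = x" by (auto simp: in_set_conv_nth)
  then show "\<exists>i. t \<le> i \<and> i < length xs \<and> x = xs ! i" by (intro exI[of _ "t + k"]) auto
next
  assume "\<exists>i. t \<le> i \<and> i < length xs \<and> x = xs ! i"
  then obtain i where i: "t \<le> i" "i < length xs" "x = xs ! i" by blast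
  then have "drop t xs ! (i - t) = x" "i - t < length (drop t xs)" by auto
  then show "x \<in> set (drop t xs)" by (metis nth_mem)
qed

lemma arc_count_suffix:
  assumes "distinct xs"
  shows "arc_count H (set (drop t xs)) =
    card {(i, j). t \<le> i \<and> i < length xs \<and> t \<le> j \<and> j < length xs \<and> H (xs ! i) (xs ! j)}"
proof -
  let ?P = "{(i, j). t \<le> i \<and> i < length xs \<and> t \<le> j \<and> j < length xs \<and> H (xs ! i) (xs ! j)}"
  let ?f = "\<lambda>(i, j). (xs ! i, xs ! j)"
  have inj: "inj_on ?f ?P" using assms by (auto simp: inj_on_def nth_eq_iff_index_eq)
  have "?f ` ?P = {(x, y). x \<in> set (drop t xs) \<and> y \<in> set (drop t xs) \<and> H x y}"
    unfolding in_set_drop_conv_nth by auto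
  then show ?thesis unfolding arc_count_def using card_image[OF inj] by simp
qed

lemma arc_count_prefix_split:
  assumes dxs: "distinct xs" and sym: "\<And>x y. H x y \<Longrightarrow> H y x" and irr: "\<And>x. \<not> H x x"
  shows "arc_count H (set xs) =
    arc_count H (set (drop t xs)) + 2 * card {e \<in> forward_edges H xs. fst e < t}"
proof -
  define n where "n = length xs"
  define P where "P = {(i, j). 0 \<le> i \<and> i < n \<and> 0 \<le> j \<and> j < n \<and> H (xs ! i) (xs ! j)}"
  define Pt where "Pt = {(i, j). t \<le> i \<and> i < n \<and> t \<le> j \<and> j < n \<and> H (xs ! i) (xs ! j)}"
  define C where "C = {e \<in> forward_edges H xs. fst e < t}"
  have "P - Pt = C \<union> prod.swap ` C"
  proof
    show "P - Pt \<subseteq> C \<union> prod.swap ` C"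
    proof
      fix p assume p: "p \<in> P - Pt"
      obtain i j where ij: "p = (i, j)" by (cases p)
      have h: "i < n" "j < n" "H (xs ! i) (xs ! j)" "i < t \<or> j < t" using p ij unfolding P_def Pt_def by auto
      then have "i \<noteq> j" using irr by auto
      then have "(i, j) \<in> C \<or> (j, i) \<in> C"
        using h sym unfolding C_def forward_edges_def n_def by (cases "i < j") auto
      then show "p \<in> C \<union> prod.swap ` C" using ij by force
    qed
    show "C \<union> prod.swap ` C \<subseteq> P - Pt"
      unfolding C_def P_def Pt_def forward_edges_def n_def using sym by auto
  qed
  moreover have "C \<inter> prod.swap ` C = {}" unfolding C_def forward_edges_def by auto
  moreover have "finite C" unfolding C_def using finite_forward_edges[of H xs] by simp
  ultimately have "card (P - Pt) = 2 * card C"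
    using card_Un_disjoint[of C "prod.swap ` C"] card_image[of prod.swap C] by simp
  moreover have "Pt \<subseteq> P" "finite P" unfolding P_def Pt_def
    by (auto intro: finite_subset[of _ "{..<n} \<times> {..<n}"])
  then have "card (P - Pt) = card P - card Pt" "card Pt \<le> card P"
    by (simp_all add: card_Diff_subset finite_subset card_mono)
  moreover have "arc_count H (set xs) = card P" "arc_count H (set (drop t xs)) = card Pt"
    using arc_count_suffix[OF dxs, of H 0] arc_count_suffix[OF dxs, of H t]
    unfolding P_def Pt_def n_def by simp_all
  ultimately show ?thesis unfolding C_def by linarith
qed

lemma sparse_order_exists:
  assumes fin: "finite R" and sym: "\<And>x y. H x y \<Longrightarrow> H y x" and irr: "\<And>x. \<not> H x x"
    and few: "arc_count H R + 2 \<le> 2 * card R"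
  shows "\<exists>xs. distinct xs \<and> set xs = R \<and> prefix_sparse H xs"
proof -
  obtain xs where xs: "distinct xs" "set xs = R"
    and suffix: "\<forall>t. surplus H (set (drop t xs)) \<ge> min (surplus H R) (-2)"
    using min_degree_order[where H = H, OF fin sym irr] by blast
  have split: "arc_count H (set xs) =
      arc_count H (set (drop t xs)) + 2 * card {e \<in> forward_edges H xs. fst e < t}" for t
    using arc_count_prefix_split[where H = H, OF xs(1) sym irr] .
  have "surplus H R \<le> -2" unfolding surplus_def using few by simp
  then have gain: "surplus H (set xs) \<le> surplus H (set (drop t xs))" for t
    using suffix xs(2) by (simp add: min_def)
  have "card {e \<in> forward_edges H xs. fst e < t} \<le> t" for t
  proof -
    have "card (set (drop t xs)) = length xs - t" "card (set xs) = length xs"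
      using xs(1) distinct_card[of "drop t xs"] distinct_card[of xs] by auto
    then show ?thesis using gain[of t] split[of t] unfolding surplus_def by linarith
  qed
  then show ?thesis unfolding prefix_sparse_def using xs by blast
qed

text \<open>The key combinatorial consequence of the hypotheses: H has fewer edges than vertices
  (|E(H)| \<le> |V| + h - |K| = |V| - 1), hence a vertex order with sparse prefixes.\<close>
lemma off_clique_sparse_order:
  assumes sg: "simple_graph V E" and conn: "\<forall>x\<in>V. \<forall>y\<in>V. E\<^sup>*\<^sup>* x y"
    and ed: "holes_edge_disjoint V E" and one: "card (nonedge_maximal_cliques V E) \<le> 1"
    and cl: "is_clique V E K" and max: "card K = clique_number V E"
    and size: "card K = card (holes V E) + 1"
  shows "\<exists>xs. distinct xs \<and> set xs = V \<and> prefix_sparse (off_clique E K) xs"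
proof -
  have "K \<noteq> {}" using size by auto
  moreover have "triangles_in E K" using triangles_in_max_clique[OF sg one cl max] .
  ultimately have "arc_count (off_clique E K) V + 2 * card K \<le> 2 * card V + 2 * card (holes V E)"
    using edge_bound[OF sg conn cl _ _ ed] by blast
  then have few: "arc_count (off_clique E K) V + 2 \<le> 2 * card V" using size by simp
  have sym: "\<And>x y. off_clique E K x y \<Longrightarrow> off_clique E K y x" using simple_graph_sym[OF sg] by blast
  have irr: "\<And>x. \<not> off_clique E K x x" using simple_graph_irrefl[OF sg] by blast
  show ?thesis
    using sparse_order_exists[where H = "off_clique E K", OF simple_graph_finite[OF sg] sym irr few] .
qed

section \<open>From a sparse order to a two-sink competition representation\<close>

text \<open>Handle an item with the largest bound last; the others occupy fewer slots than it may use.\<close>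
lemma distinct_slots:
  fixes \<mu> :: "'e \<Rightarrow> nat"
  assumes "finite Ed" and "\<forall>t. card {e \<in> Ed. \<mu> e < t} \<le> t"
  shows "\<exists>\<sigma>. inj_on \<sigma> Ed \<and> (\<forall>e\<in>Ed. \<sigma> e \<le> \<mu> e)"
  using assms
proof (induction Ed rule: finite_remove_induct)
  case empty
  then show ?case by simp
next
  case (remove A)
  obtain e0 where e0: "e0 \<in> A" "\<forall>e\<in>A. \<mu> e \<le> \<mu> e0"
    using ex_max_point[OF remove.hyps(1,2)] by blast
  have "card {e \<in> A - {e0}. \<mu> e < t} \<le> t" for t
  proof -
    have "card {e \<in> A - {e0}. \<mu> e < t} \<le> card {e \<in> A. \<mu> e < t}"
      using remove.hyps(1) by (intro card_mono) auto
    then show ?thesis using remove.prems by (meson le_trans)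
  qed
  then obtain \<sigma>' where \<sigma>': "inj_on \<sigma>' (A - {e0})" "\<forall>e\<in>A - {e0}. \<sigma>' e \<le> \<mu> e"
    using remove.IH[OF e0(1)] by blast
  have "{e \<in> A. \<mu> e < Suc (\<mu> e0)} = A" using e0(2) by auto
  then have "card A \<le> Suc (\<mu> e0)" using remove.prems by metis
  then have "card (\<sigma>' ` (A - {e0})) < card {..\<mu> e0}"
    using card_image[OF \<sigma>'(1)] remove.hyps(1) e0(1) by (simp add: card_Diff_singleton)
  then have "\<not> {..\<mu> e0} \<subseteq> \<sigma>' ` (A - {e0})"
    using remove.hyps(1) card_mono[of "\<sigma>' ` (A - {e0})" "{..\<mu> e0}"] by auto
  then obtain s where s: "s \<le> \<mu> e0" "s \<notin> \<sigma>' ` (A - {e0})" by auto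
  define \<sigma> where "\<sigma> = \<sigma>'(e0 := s)"
  have "inj_on \<sigma> (A - {e0})" using \<sigma>'(1) unfolding \<sigma>_def inj_on_def by simp
  moreover have "\<sigma> e0 \<notin> \<sigma> ` (A - {e0})" using s unfolding \<sigma>_def by auto
  ultimately have "inj_on \<sigma> A" using inj_on_insert[of \<sigma> e0 "A - {e0}"] insert_Diff[OF e0(1)] by simp
  moreover have "\<forall>e\<in>A. \<sigma> e \<le> \<mu> e" using s(1) \<sigma>'(2) unfolding \<sigma>_def by auto
  ultimately show ?case by blast
qed

lemma edge_sinks:
  fixes g :: "'a \<Rightarrow> 'b"
  assumes inj: "inj_on g V" and j1: "j1 \<notin> g ` V"
    and xs: "distinct xs" "set xs = V" and sparse: "prefix_sparse H xs"
  shows "\<exists>sink rank. inj_on sink (forward_edges H xs) \<and>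
    (\<forall>e\<in>forward_edges H xs. sink e \<in> insert j1 (g ` V) \<and>
       rank (sink e) < rank (g (xs ! fst e)) \<and> rank (sink e) < rank (g (xs ! snd e))) \<and>
    (\<forall>z. z \<notin> g ` V \<longrightarrow> rank z = (0::nat)) \<and> (\<forall>a\<in>V. rank (g a) > 0)"
proof -
  define n where "n = length xs"
  define Ed where "Ed = forward_edges H xs"
  obtain \<sigma> where \<sigma>: "inj_on \<sigma> Ed" "\<forall>e\<in>Ed. \<sigma> e \<le> fst e"
    using distinct_slots[of Ed fst] finite_forward_edges sparse
    unfolding prefix_sparse_def Ed_def by blast
  define \<phi> where "\<phi> i = g (xs ! i)" for i
  have \<phi>_inj: "inj_on \<phi> {..<n}"
  proof (rule inj_onI)
    fix i j assume ij: "i \<in> {..<n}" "j \<in> {..<n}" "\<phi> i = \<phi> j"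
    then have "xs ! i = xs ! j" using inj xs(2) nth_mem unfolding \<phi>_def n_def inj_on_def by auto
    then show "i = j" using xs(1) ij nth_eq_iff_index_eq unfolding n_def by auto
  qed
  have \<phi>_range: "\<phi> ` {..<n} = g ` V" using xs unfolding \<phi>_def n_def by (auto simp: set_conv_nth)
  define rank where "rank z = (if z \<in> g ` V then Suc (the_inv_into {..<n} \<phi> z) else 0)" for z
  have rank_\<phi>: "rank (\<phi> i) = Suc i" if "i < n" for i
    using that \<phi>_range the_inv_into_f_f[OF \<phi>_inj] unfolding rank_def by auto
  define sink where "sink e = (if \<sigma> e = 0 then j1 else \<phi> (\<sigma> e - 1))" for e
  have Ed_lt: "fst e < snd e" "snd e < n" if "e \<in> Ed" for e
    using that unfolding Ed_def forward_edges_def n_def by auto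
  have slot_lt: "\<sigma> e - 1 < n" if "e \<in> Ed" for e using \<sigma>(2) Ed_lt[OF that] that by fastforce
  have rank_off: "rank z = 0" if "z \<notin> g ` V" for z using that unfolding rank_def by simp
  have rank_sink: "rank (sink e) = \<sigma> e" if "e \<in> Ed" for e
    using rank_off[OF j1] rank_\<phi>[OF slot_lt[OF that]] unfolding sink_def by auto
  have "\<sigma> e = \<sigma> e'" if "e \<in> Ed" "e' \<in> Ed" "sink e = sink e'" for e e'
  proof (cases "\<sigma> e = 0 \<or> \<sigma> e' = 0")
    case True
    then show ?thesis using that rank_sink by metis
  next
    case False
    then have "\<phi> (\<sigma> e - 1) = \<phi> (\<sigma> e' - 1)" using that(3) unfolding sink_def by simp
    then show ?thesis using \<phi>_inj slot_lt that(1,2) False unfolding inj_on_def by fastforce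
  qed
  then have "inj_on sink Ed" using \<sigma>(1) unfolding inj_on_def by blast
  moreover have "sink e \<in> insert j1 (g ` V)" if "e \<in> Ed" for e
    using \<phi>_range slot_lt[OF that] unfolding sink_def by auto
  moreover have "rank (sink e) < rank (g (xs ! fst e)) \<and> rank (sink e) < rank (g (xs ! snd e))"
    if "e \<in> Ed" for e
    using rank_sink[OF that] rank_\<phi> Ed_lt[OF that] \<sigma>(2) that unfolding \<phi>_def by fastforce
  moreover have "\<forall>a\<in>V. rank (g a) > 0" unfolding rank_def by auto
  ultimately show ?thesis using rank_off unfolding Ed_def by blast
qed

lemma forward_edge_of_edge:
  assumes xs: "distinct xs" "set xs = V" and sym: "\<And>x y. H x y \<Longrightarrow> H y x"
    and ab: "a \<in> V" "b \<in> V" "a \<noteq> b" "H a b"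
  shows "\<exists>e\<in>forward_edges H xs. {a, b} = {xs ! fst e, xs ! snd e}"
proof -
  obtain i j where ij: "i < length xs" "j < length xs" "a = xs ! i" "b = xs ! j"
    using ab xs by (auto simp: in_set_conv_nth)
  then have "i \<noteq> j" using ab(3) by auto
  then have "(i, j) \<in> forward_edges H xs \<or> (j, i) \<in> forward_edges H xs"
    using ij ab(4) sym unfolding forward_edges_def by (cases "i < j") auto
  then show ?thesis using ij by force
qed

lemma competition_graph_of_sinks:
  assumes sink: "inj_on sink Ed" "\<forall>e\<in>Ed. sink e \<in> W \<and> sink e \<noteq> j"
    and ends: "\<forall>e\<in>Ed. ends e \<subseteq> W \<and> (\<forall>x\<in>ends e. \<forall>y\<in>ends e. x \<noteq> y \<longrightarrow> F x y)"
    and Q: "j \<in> W" "Q \<subseteq> W" "\<forall>x\<in>Q. \<forall>y\<in>Q. x \<noteq> y \<longrightarrow> F x y"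
    and cover: "\<forall>x\<in>W. \<forall>y\<in>W. x \<noteq> y \<longrightarrow> F x y \<longrightarrow>
      (x \<in> Q \<and> y \<in> Q) \<or> (\<exists>e\<in>Ed. x \<in> ends e \<and> y \<in> ends e)"
  shows "is_competition_graph W ((\<lambda>x. (x, j)) ` Q \<union> {(x, sink e) | x e. e \<in> Ed \<and> x \<in> ends e}) F"
proof -
  let ?A = "(\<lambda>x. (x, j)) ` Q \<union> {(x, sink e) | x e. e \<in> Ed \<and> x \<in> ends e}"
  have "?A \<subseteq> W \<times> W" using sink(2) ends Q(1,2) by auto
  moreover have "\<forall>x\<in>W. \<forall>y\<in>W. x \<noteq> y \<longrightarrow> (F x y \<longleftrightarrow> (\<exists>v\<in>W. (x, v) \<in> ?A \<and> (y, v) \<in> ?A))"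
  proof (intro ballI impI iffI)
    fix x y assume xy: "x \<in> W" "y \<in> W" "x \<noteq> y" and "F x y"
    then consider "x \<in> Q" "y \<in> Q" | e where "e \<in> Ed" "x \<in> ends e" "y \<in> ends e"
      using cover by blast
    then show "\<exists>v\<in>W. (x, v) \<in> ?A \<and> (y, v) \<in> ?A"
    proof cases
      case 1
      then have "(x, j) \<in> ?A" "(y, j) \<in> ?A" by auto
      then show ?thesis using Q(1) by blast
    next
      case 2
      then have "(x, sink e) \<in> ?A" "(y, sink e) \<in> ?A" by blast+
      then show ?thesis using sink(2) 2(1) by blast
    qed
  next
    fix x y assume "x \<noteq> y" and "\<exists>v\<in>W. (x, v) \<in> ?A \<and> (y, v) \<in> ?A"
    then obtain v where "(x, v) \<in> ?A" "(y, v) \<in> ?A" by blast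
    then have x: "(v = j \<and> x \<in> Q) \<or> (\<exists>e\<in>Ed. v = sink e \<and> x \<in> ends e)"
      and y: "(v = j \<and> y \<in> Q) \<or> (\<exists>e\<in>Ed. v = sink e \<and> y \<in> ends e)" by blast+
    show "F x y"
    proof (cases "v = j")
      case True
      then have "x \<in> Q" "y \<in> Q" using x y sink(2) by auto
      then show ?thesis using Q(3) \<open>x \<noteq> y\<close> by blast
    next
      case False
      then obtain e e' where "e \<in> Ed" "e' \<in> Ed" "sink e = sink e'" "x \<in> ends e" "y \<in> ends e'"
        using x y by auto
      moreover from this have "e = e'" using sink(1) unfolding inj_on_def by blast
      ultimately show ?thesis using ends \<open>x \<noteq> y\<close> by blast
    qed
  qed
  ultimately show ?thesis unfolding is_competition_graph_def by (rule conjI)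
qed

text \<open>The representation: both ends of each edge of H point to the sink of that edge and all
  of K points to j2. Every arc decreases the rank, so the digraph is acyclic.\<close>
lemma two_sink_representation:
  fixes g :: "'a \<Rightarrow> 'b"
  assumes sg: "simple_graph V E" and cl: "is_clique V E K"
    and inj: "inj_on g V" and j1: "j1 \<notin> g ` V" and j2: "j2 \<notin> g ` V" and j12: "j1 \<noteq> j2"
    and xs: "distinct xs" "set xs = V" and sparse: "prefix_sparse (off_clique E K) xs"
  shows "\<exists>A. acyclic A \<and> is_competition_graph (insert j1 (insert j2 (g ` V))) A
             (\<lambda>u w. \<exists>a\<in>V. \<exists>b\<in>V. u = g a \<and> w = g b \<and> E a b) \<and> (\<forall>x\<in>K. (g x, j2) \<in> A)"
proof -
  define Ed where "Ed = forward_edges (off_clique E K) xs"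
  define W where "W = insert j1 (insert j2 (g ` V))"
  define F where "F = (\<lambda>u w. \<exists>a\<in>V. \<exists>b\<in>V. u = g a \<and> w = g b \<and> E a b)"
  obtain sink and rank :: "'b \<Rightarrow> nat" where sink_inj: "inj_on sink Ed"
    and sink: "\<forall>e\<in>Ed. sink e \<in> insert j1 (g ` V) \<and>
       rank (sink e) < rank (g (xs ! fst e)) \<and> rank (sink e) < rank (g (xs ! snd e))"
    and rank_off: "\<forall>z. z \<notin> g ` V \<longrightarrow> rank z = 0" and rank_on: "\<forall>a\<in>V. rank (g a) > 0"
    using edge_sinks[OF inj j1 xs sparse] unfolding Ed_def by auto
  define ends where "ends e = {g (xs ! fst e), g (xs ! snd e)}" for e
  define A where "A = (\<lambda>x. (x, j2)) ` g ` K \<union> {(x, sink e) | x e. e \<in> Ed \<and> x \<in> ends e}"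
  have KV: "K \<subseteq> V" using cl unfolding is_clique_def by simp
  have Ed: "xs ! fst e \<in> V" "xs ! snd e \<in> V" "E (xs ! fst e) (xs ! snd e)" if "e \<in> Ed" for e
    using that xs(2) unfolding Ed_def forward_edges_def by auto
  have ends_clique: "F x y" if "e \<in> Ed" "x \<in> ends e" "y \<in> ends e" "x \<noteq> y" for e x y
  proof -
    have "(x = g (xs ! fst e) \<and> y = g (xs ! snd e)) \<or> (x = g (xs ! snd e) \<and> y = g (xs ! fst e))"
      using that(2-4) unfolding ends_def by auto
    then show ?thesis using Ed[OF that(1)] simple_graph_sym[OF sg] unfolding F_def by auto
  qed
  have K_clique: "F x y" if xy: "x \<in> g ` K" "y \<in> g ` K" "x \<noteq> y" for x y
  proof -
    obtain a b where "a \<in> K" "b \<in> K" "x = g a" "y = g b" using xy(1,2) by blast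
    moreover have "a \<noteq> b" using xy(3) calculation by auto
    ultimately show ?thesis using cl KV unfolding F_def is_clique_def by blast
  qed
  have cover: "(x \<in> g ` K \<and> y \<in> g ` K) \<or> (\<exists>e\<in>Ed. x \<in> ends e \<and> y \<in> ends e)"
    if xy: "x \<noteq> y" "F x y" for x y
  proof -
    obtain a b where ab: "a \<in> V" "b \<in> V" "x = g a" "y = g b" "E a b" "a \<noteq> b"
      using xy unfolding F_def by blast
    have sym_H: "\<And>x y. off_clique E K x y \<Longrightarrow> off_clique E K y x"
      using simple_graph_sym[OF sg] by blast
    show ?thesis
    proof (cases "a \<in> K \<and> b \<in> K")
      case False
      then have "off_clique E K a b" using ab(5) by simp
      then obtain e where e: "e \<in> Ed" "{a, b} = {xs ! fst e, xs ! snd e}"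
        using forward_edge_of_edge[where H = "off_clique E K", OF xs sym_H ab(1,2,6)]
        unfolding Ed_def by blast
      then have "ends e = g ` {a, b}" unfolding ends_def by simp
      then show ?thesis using e(1) ab(3,4) by blast
    qed (use ab in blast)
  qed
  have "is_competition_graph W A F"
    unfolding A_def
  proof (rule competition_graph_of_sinks[OF sink_inj])
    show "\<forall>e\<in>Ed. sink e \<in> W \<and> sink e \<noteq> j2" using sink j2 j12 unfolding W_def by auto
    show "\<forall>e\<in>Ed. ends e \<subseteq> W \<and> (\<forall>x\<in>ends e. \<forall>y\<in>ends e. x \<noteq> y \<longrightarrow> F x y)"
      using Ed ends_clique unfolding ends_def W_def by auto
    show "j2 \<in> W" "g ` K \<subseteq> W" using KV unfolding W_def by auto
  qed (use K_clique cover in blast)+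
  moreover have "acyclic A"
  proof (rule acyclicI_order[where f = rank])
    fix x s assume "(x, s) \<in> A"
    then show "rank s < rank x"
      using rank_off rank_on j2 KV sink unfolding A_def ends_def by auto
  qed
  moreover have "\<forall>x\<in>K. (g x, j2) \<in> A" unfolding A_def by auto
  ultimately show ?thesis unfolding W_def F_def by blast
qed

lemma competition_number_le_two:
  fixes A :: "(('a + nat) \<times> ('a + nat)) set"
  assumes sg: "simple_graph V E" and "acyclic A"
    and comp: "is_competition_graph (insert (Inr 0) (insert (Inr 1) (Inl ` V))) A
           (\<lambda>u w. \<exists>a\<in>V. \<exists>b\<in>V. u = Inl a \<and> w = Inl b \<and> E a b)"
  shows "competition_number V E \<le> 2"
proof -
  have "insert (Inr 0) (insert (Inr 1) (Inl ` V)) = (Inl ` V \<union> Inr ` {..<2} :: ('a + nat) set)"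
    by (auto simp: lessThan_def less_2_cases_iff)
  moreover have "(\<lambda>(u :: 'a + nat) (w :: 'a + nat). \<exists>a\<in>V. \<exists>b\<in>V. u = Inl a \<and> w = Inl b \<and> E a b) =
      (\<lambda>(x :: 'a + nat) (y :: 'a + nat). case (x, y) of (Inl a, Inl b) \<Rightarrow> E a b | _ \<Rightarrow> False)"
  proof (intro ext)
    fix x y :: "'a + nat"
    show "(\<exists>a\<in>V. \<exists>b\<in>V. x = Inl a \<and> y = Inl b \<and> E a b) =
        (case (x, y) of (Inl a, Inl b) \<Rightarrow> E a b | _ \<Rightarrow> False)"
      using simple_graph_vertices[OF sg] by (cases x; cases y) auto
  qed
  ultimately have "acyclic A \<and> is_competition_graph (Inl ` V \<union> Inr ` {..<2}) A
      (\<lambda>x y. case (x, y) of (Inl a, Inl b) \<Rightarrow> E a b | _ \<Rightarrow> False)"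
    using assms(2) comp by simp
  then show ?thesis unfolding competition_number_def by (blast intro: Least_le)
qed

theorem theorem1:
  fixes V :: "'a set" and E :: "'a \<Rightarrow> 'a \<Rightarrow> bool" and h :: nat and K :: "'a set"
    and i1 i2 :: 'a
  assumes "simple_graph V E"
    and "connected_graph V E"
    and "card (holes V E) = h"
    and "\<forall>S\<in>holes V E. \<forall>T\<in>holes V E. S \<noteq> T \<longrightarrow> edge_disjoint E S T"
    and "card (nonedge_maximal_cliques V E) \<le> 1"
    and "clique_number V E = h + 1"
    and "is_clique V E K" and "card K = clique_number V E"
    and "i1 \<notin> V" and "i2 \<notin> V" and "i1 \<noteq> i2"
  shows "(\<exists>A. acyclic A \<and>
           is_competition_graph (insert i1 (insert i2 V)) A (\<lambda>x y. x \<in> V \<and> y \<in> V \<and> E x y) \<and>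
           (\<forall>x\<in>K. (x, i2) \<in> A))
         \<and> competition_number V E \<le> 2"
proof -
  note sg = assms(1) and cl = assms(7)
  have conn: "\<forall>x\<in>V. \<forall>y\<in>V. E\<^sup>*\<^sup>* x y" using assms(2) unfolding connected_graph_def by simp
  obtain xs where xs: "distinct xs" "set xs = V" "prefix_sparse (off_clique E K) xs"
    using off_clique_sparse_order[OF sg conn assms(4,5) cl assms(8)] assms(3,6,8) by auto
  have "i1 \<notin> id ` V" "i2 \<notin> id ` V" using assms(9,10) by auto
  then have "\<exists>A. acyclic A \<and> is_competition_graph (insert i1 (insert i2 (id ` V))) A
      (\<lambda>u w. \<exists>a\<in>V. \<exists>b\<in>V. u = id a \<and> w = id b \<and> E a b) \<and> (\<forall>x\<in>K. (id x, i2) \<in> A)"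
    by (rule two_sink_representation[OF sg cl inj_on_id _ _ assms(11) xs])
  moreover have "(\<lambda>u w. \<exists>a\<in>V. \<exists>b\<in>V. u = id a \<and> w = id b \<and> E a b) =
      (\<lambda>x y. x \<in> V \<and> y \<in> V \<and> E x y)" by auto
  moreover have "competition_number V E \<le> 2"
  proof -
    have "Inr 0 \<notin> Inl ` V" "Inr 1 \<notin> Inl ` V" "(Inr 0 :: 'a + nat) \<noteq> Inr 1" by auto
    then obtain A :: "(('a + nat) \<times> ('a + nat)) set" where "acyclic A"
      "is_competition_graph (insert (Inr 0) (insert (Inr 1) (Inl ` V))) A
         (\<lambda>u w. \<exists>a\<in>V. \<exists>b\<in>V. u = Inl a \<and> w = Inl b \<and> E a b)"
      using two_sink_representation[OF sg cl inj_Inl _ _ _ xs] by blast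
    then show ?thesis by (rule competition_number_le_two[OF sg])
  qed
  ultimately show ?thesis by simp
qed

end
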